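(* Let $G$ be a connected, simple, undirected graph with infinitely many vertices. Then for every integer $\ell\geq 2$, every $\{\ell\}$-resolving set of $G$ is infinite (i.e. $\beta_\ell(G)=\infty$), and for every integer $\ell\geq 1$, every $\ell$-solid-resolving set of $G$ is infinite (i.e. $\beta_\ell^s(G)=\infty$).
   Context: $d$ is the shortest-path distance; for nonempty $X\subseteq V(G)$, $d(s,X)=\min_{x\in X}d(s,x)$; for $S\subseteq V(G)$, $\mathcal{D}_S(X)$ is the family $(d(s,X))_{s\in S}$. $S$ is an $\{\ell\}$-resolving set if $\mathcal{D}_S(X)\neq\mathcal{D}_S(Y)$ for all distinct nonempty $X,Y\subseteq V(G)$ with $|X|\leq\ell$, $|Y|\leq\ell$; $S$ is an $\ell$-solid-resolving set if $\mathcal{D}_S(X)\neq\mathcal{D}_S(Y)$ for all distinct nonempty $X,Y\subseteq V(G)$ with $|X|\leq \ell$ ($Y$ arbitrary). $\beta_\ell(G)$ and $\beta_\ell^s(G)$ denote the minimum cardinalities of such sets. *)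

theory Defs
  imports Main
begin

text \<open>A simple undirected graph on the vertex type 'a is given by an edge relation E
that is symmetric and irreflexive. The vertex set is UNIV.\<close>

definition simple_graph :: "('a \<Rightarrow> 'a \<Rightarrow> bool) \<Rightarrow> bool" where
  "simple_graph E \<longleftrightarrow> (\<forall>u v. E u v \<longrightarrow> E v u) \<and> (\<forall>v. \<not> E v v)"

definition connected_graph :: "('a \<Rightarrow> 'a \<Rightarrow> bool) \<Rightarrow> bool" where
  "connected_graph E \<longleftrightarrow> (\<forall>u v. \<exists>n. (E ^^ n) u v)"

text \<open>Shortest-path distance (meaningful for connected graphs).\<close>
definition gdist :: "('a \<Rightarrow> 'a \<Rightarrow> bool) \<Rightarrow> 'a \<Rightarrow> 'a \<Rightarrow> nat" where
  "gdist E u v = (LEAST n. (E ^^ n) u v)"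

definition setdist :: "('a \<Rightarrow> 'a \<Rightarrow> bool) \<Rightarrow> 'a \<Rightarrow> 'a set \<Rightarrow> nat" where
  "setdist E s X = (INF x\<in>X. gdist E s x)"

definition distvec :: "('a \<Rightarrow> 'a \<Rightarrow> bool) \<Rightarrow> 'a set \<Rightarrow> 'a set \<Rightarrow> ('a \<Rightarrow> nat)" where
  "distvec E S X = (\<lambda>s. if s \<in> S then setdist E s X else 0)"

definition ell_resolving :: "('a \<Rightarrow> 'a \<Rightarrow> bool) \<Rightarrow> nat \<Rightarrow> 'a set \<Rightarrow> bool" where
  "ell_resolving E l S \<longleftrightarrow>
     (\<forall>X Y. X \<noteq> {} \<and> Y \<noteq> {} \<and> X \<noteq> Y \<and> finite X \<and> card X \<le> l \<and> finite Y \<and> card Y \<le> l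
        \<longrightarrow> distvec E S X \<noteq> distvec E S Y)"

definition ell_solid_resolving :: "('a \<Rightarrow> 'a \<Rightarrow> bool) \<Rightarrow> nat \<Rightarrow> 'a set \<Rightarrow> bool" where
  "ell_solid_resolving E l S \<longleftrightarrow>
     (\<forall>X Y. X \<noteq> {} \<and> Y \<noteq> {} \<and> X \<noteq> Y \<and> finite X \<and> card X \<le> l
        \<longrightarrow> distvec E S X \<noteq> distvec E S Y)"

end

theory Submission
  imports Defs "HOL-Library.FuncSet"
begin

text \<open>Fix a vertex \<open>s\<^sub>0\<close>. By the triangle inequality, \<open>d(s,v) - d(s\<^sub>0,v)\<close> is bounded
  independently of \<open>v\<close>, so for a finite set \<open>S\<close> the profiles
  \<open>(d(s,v) - d(s\<^sub>0,v))\<^sub>s\<^sub>\<in>\<^sub>S\<close> take only finitely many values. With infinitely many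
  vertices, two distinct vertices \<open>x\<close>, \<open>y\<close> share a profile; ordering them so that
  \<open>d(s\<^sub>0,x) \<le> d(s\<^sub>0,y)\<close> gives \<open>d(s,x) \<le> d(s,y)\<close> for every \<open>s \<in> S\<close>. Hence \<open>{x}\<close> and
  \<open>{x,y}\<close> have the same distances to every vertex of \<open>S\<close>.\<close>

lemma relpowp_gdist:
  assumes "connected_graph E"
  shows "(E ^^ gdist E u v) u v"
proof -
  obtain n where "(E ^^ n) u v"
    using assms unfolding connected_graph_def by blast
  then show ?thesis
    unfolding gdist_def by (rule LeastI)
qed

lemma gdist_triangle:
  assumes "connected_graph E"
  shows "gdist E u v \<le> gdist E u w + gdist E w v"
proof -
  have "(E ^^ (gdist E u w + gdist E w v)) u v"
    using relpowp_gdist[OF assms, of u w] relpowp_gdist[OF assms, of w v]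
    by (auto simp: relpowp_add)
  then show ?thesis
    unfolding gdist_def by (rule Least_le)
qed

lemma gdist_diff_bounded:
  assumes "connected_graph E"
  shows "\<bar>int (gdist E s v) - int (gdist E s\<^sub>0 v)\<bar> \<le> int (gdist E s s\<^sub>0 + gdist E s\<^sub>0 s)"
  using gdist_triangle[OF assms, of s v s\<^sub>0] gdist_triangle[OF assms, of s\<^sub>0 v s] by linarith

lemma finite_range_gdist_profile:
  assumes "connected_graph E" and "finite S"
  shows "finite (range (\<lambda>v. restrict (\<lambda>s. int (gdist E s v) - int (gdist E s\<^sub>0 v)) S))"
proof (rule finite_subset)
  define D where "D s = int (gdist E s s\<^sub>0 + gdist E s\<^sub>0 s)" for s
  show "range (\<lambda>v. restrict (\<lambda>s. int (gdist E s v) - int (gdist E s\<^sub>0 v)) S)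
        \<subseteq> (\<Pi>\<^sub>E s\<in>S. {- D s..D s})"
  proof (intro subsetI, elim rangeE)
    fix v f assume "f = restrict (\<lambda>s. int (gdist E s v) - int (gdist E s\<^sub>0 v)) S"
    moreover have "int (gdist E s v) - int (gdist E s\<^sub>0 v) \<in> {- D s..D s}" for s
      using gdist_diff_bounded[OF assms(1), of s v s\<^sub>0] unfolding D_def atLeastAtMost_iff
      by linarith
    ultimately show "f \<in> (\<Pi>\<^sub>E s\<in>S. {- D s..D s})"
      by simp
  qed
  show "finite (\<Pi>\<^sub>E s\<in>S. {- D s..D s})"
    using assms(2) by (intro finite_PiE) auto
qed

lemma exists_gdist_dominated_pair:
  assumes "connected_graph E" and "infinite (UNIV :: 'a set)" and "finite (S :: 'a set)"
  obtains x y where "x \<noteq> y" and "\<forall>s\<in>S. gdist E s x \<le> gdist E s y"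
proof -
  fix s\<^sub>0 :: 'a
  define profile where "profile v = restrict (\<lambda>s. int (gdist E s v) - int (gdist E s\<^sub>0 v)) S" for v
  have "\<not> inj profile"
    using finite_range_gdist_profile[OF assms(1,3), of s\<^sub>0] assms(2) finite_imageD
    unfolding profile_def by blast
  then obtain u w where "u \<noteq> w" and "profile u = profile w"
    unfolding inj_def by blast
  have same_diff:
    "int (gdist E s u) - int (gdist E s\<^sub>0 u) = int (gdist E s w) - int (gdist E s\<^sub>0 w)"
    if "s \<in> S" for s
    using fun_cong[OF \<open>profile u = profile w\<close>, of s] that by (simp add: profile_def)
  show thesis
  proof (cases "gdist E s\<^sub>0 u \<le> gdist E s\<^sub>0 w")
    case True
    with same_diff \<open>u \<noteq> w\<close> show thesis
      by (intro that[of u w]) force+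
  next
    case False
    with same_diff \<open>u \<noteq> w\<close> show thesis
      by (intro that[of w u]) force+
  qed
qed

lemma distvec_singleton_eq_doubleton:
  assumes "\<forall>s\<in>S. gdist E s x \<le> gdist E s y"
  shows "distvec E S {x} = distvec E S {x, y}"
  using assms unfolding distvec_def setdist_def by (intro ext) (simp add: cInf_eq_Min min_def)

lemma finite_set_confuses_singleton_doubleton:
  assumes "connected_graph E" and "infinite (UNIV :: 'a set)" and "finite (S :: 'a set)"
  obtains x y where "{x} \<noteq> {x, y}" and "card {x, y} = 2"
    and "distvec E S {x} = distvec E S {x, y}"
proof -
  obtain x y where "x \<noteq> y" and "\<forall>s\<in>S. gdist E s x \<le> gdist E s y"
    using exists_gdist_dominated_pair[OF assms] .
  then show thesis
    by (intro that[of x y]) (simp_all add: distvec_singleton_eq_doubleton)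
qed

theorem mainTheorem7:
  fixes E :: "'a \<Rightarrow> 'a \<Rightarrow> bool"
  assumes "simple_graph E" and "connected_graph E" and "infinite (UNIV :: 'a set)"
  shows "(\<forall>l::nat. l \<ge> 2 \<longrightarrow> (\<forall>S. ell_resolving E l S \<longrightarrow> infinite S))
       \<and> (\<forall>l::nat. l \<ge> 1 \<longrightarrow> (\<forall>S. ell_solid_resolving E l S \<longrightarrow> infinite S))"
proof (intro conjI allI impI notI)
  fix l :: nat and S :: "'a set"
  assume "l \<ge> 2" and resolving: "ell_resolving E l S" and "finite S"
  obtain x y where "{x} \<noteq> {x, y}" and "card {x, y} = 2"
    and "distvec E S {x} = distvec E S {x, y}"
    using finite_set_confuses_singleton_doubleton[OF assms(2,3) \<open>finite S\<close>] .
  with \<open>l \<ge> 2\<close> show False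
    using resolving[unfolded ell_resolving_def, rule_format, of "{x}" "{x, y}"] by simp
next
  fix l :: nat and S :: "'a set"
  assume "l \<ge> 1" and resolving: "ell_solid_resolving E l S" and "finite S"
  obtain x y where "{x} \<noteq> {x, y}"
    and "distvec E S {x} = distvec E S {x, y}"
    using finite_set_confuses_singleton_doubleton[OF assms(2,3) \<open>finite S\<close>] .
  with \<open>l \<ge> 1\<close> show False
    using resolving[unfolded ell_solid_resolving_def, rule_format, of "{x}" "{x, y}"] by simp
qed

end
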